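(* In a finite dynamic game as described in the context, suppose $K^i$ is unilaterally sufficient information for player $i$, and let $g^{-i}$ be a fully mixed behavioral strategy profile of the players other than $i$. For $\tau\in\mathcal{T}$ define $$Q_\tau^i(h_\tau^i,u_\tau^i)=\mathbb{E}^{g^{-i}}[R_\tau^i\mid h_\tau^i,u_\tau^i]+\max_{\tilde g_{\tau+1:T}^i}\mathbb{E}^{\tilde g_{\tau+1:T}^i,g^{-i}}\Big[\sum_{t=\tau+1}^T R_t^i\,\Big|\,h_\tau^i,u_\tau^i\Big],$$ the maximum being over behavioral strategies of player $i$ for times $\tau+1,\dots,T$. Then there exists a function $\hat Q_\tau^i:\mathcal{K}_\tau^i\times\mathcal{U}_\tau^i\to[-T,T]$ such that $Q_\tau^i(h_\tau^i,u_\tau^i)=\hat Q_\tau^i(k_\tau^i,u_\tau^i)$, where $k_\tau^i$ is the compression of $h_\tau^i$.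
   Context: Game model: finite set of players $\mathcal{I}$, times $\mathcal{T}=\{1,\dots,T\}$. At time $t$ each player $i$ takes action $U_t^i\in\mathcal{U}_t^i$, obtains reward $R_t^i\in[-1,1]$ and learns new information $Z_t^i\in\mathcal{Z}_t^i$. There is a state $X_t\in\mathcal{X}_t$ with $(X_{t+1},Z_t,R_t)=f_t(X_t,U_t,W_t)$ for fixed functions $f_t$. Primitive random variables $(X_1,H_1)$ and $W_1,\dots,W_T$ are mutually independent with commonly known distributions. All sets are finite. Perfect recall: $H_t^i=(H_1^i,Z_{1:t-1}^i)\in\mathcal{H}_t^i$, and $U_t^i$ is a component of $Z_t^i$. Behavioral strategy $g_t^i:\mathcal{H}_t^i\to\Delta(\mathcal{U}_t^i)$; fully mixed means every action has positive probability at every history. Conditional quantities given $(h_\tau^i,u_\tau^i)$ under $g^{-i}$ alone do not depend on player $i$'s strategy. A realization is admissible under $g$ if it has positive probability under $g$. Compression: $K_1^i=\iota_1^i(H_1^i)$, $K_t^i=\iota_t^i(K_{t-1}^i,Z_{t-1}^i)$ for fixed maps, finite value sets $\mathcal{K}_t^i$. Unilaterally sufficient information (USI): $K^i$ is USI for player $i$ if there exist $F_t^{i,g^i}:\mathcal{K}_t^i\to\Delta(\mathcal{H}_t^i)$ depending only on $g^i$ and $\Phi_t^{i,g^{-i}}:\mathcal{K}_t^i\to\Delta(\mathcal{X}_t\times\mathcal{H}_t^{-i})$ depending only on $g^{-i}$ with $\Pr^g(x_t,h_t\mid k_t^i)=F_t^{i,g^i}(h_t^i\mid k_t^i)\Phi_t^{i,g^{-i}}(x_t,h_t^{-i}\mid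 k_t^i)$ for all behavioral profiles $g$, all $t$, all $k_t^i$ admissible under $g$ (with $x_t,h_t^i,h_t^{-i}$ ranging independently; the left side is $0$ if they disagree on shared components). *)

theory Defs
  imports "HOL-Probability.Product_PMF"
begin

text \<open>Type parameters: 'p players, 's states, 'h initial private information H_1^i,
  'u actions, 'z new information Z_t^i, 'w noise W_t.
  A history of player i at time t is H_t^i = (H_1^i, [Z_1^i, ..., Z_{t-1}^i]).\<close>

record ('p, 's, 'h, 'u, 'z, 'w) game =
  horizon :: nat
  Xs :: "nat \<Rightarrow> 's set"
  Us :: "nat \<Rightarrow> 'p \<Rightarrow> 'u set"
  Zs :: "nat \<Rightarrow> 'p \<Rightarrow> 'z set"
  H1s :: "'p \<Rightarrow> 'h set"
  init :: "('s \<times> ('p \<Rightarrow> 'h)) pmf"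
  noise :: "nat \<Rightarrow> 'w pmf"
  dyn :: "nat \<Rightarrow> 's \<Rightarrow> ('p \<Rightarrow> 'u) \<Rightarrow> 'w \<Rightarrow> 's \<times> ('p \<Rightarrow> 'z) \<times> ('p \<Rightarrow> real)"
  act :: "nat \<Rightarrow> 'p \<Rightarrow> 'z \<Rightarrow> 'u"  \<comment> \<open>U_t^i is the component act t i of Z_t^i\<close>

text \<open>Well-formedness: all sets finite, rewards in [-1,1], perfect recall
  (the own action is a component of the new information).\<close>
definition game_wf :: "('p, 's, 'h, 'u, 'z, 'w) game \<Rightarrow> bool" where
  "game_wf G \<longleftrightarrow>
     (\<forall>t. finite (Xs G t)) \<and>
     (\<forall>t i. finite (Us G t i) \<and> Us G t i \<noteq> {}) \<and>
     (\<forall>t i. finite (Zs G t i)) \<and>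
     (\<forall>i. finite (H1s G i)) \<and>
     (\<forall>t. finite (set_pmf (noise G t))) \<and>
     set_pmf (init G) \<subseteq> Xs G 1 \<times> {h. \<forall>i. h i \<in> H1s G i} \<and>
     (\<forall>t\<in>{1..horizon G}. \<forall>x\<in>Xs G t. \<forall>u. (\<forall>i. u i \<in> Us G t i) \<longrightarrow>
        (\<forall>w\<in>set_pmf (noise G t).
          (case dyn G t x u w of (x', z, r) \<Rightarrow>
             x' \<in> Xs G (Suc t) \<and>
             (\<forall>i. z i \<in> Zs G t i \<and> act G t i (z i) = u i \<and> r i \<in> {-1..1}))))"

type_synonym ('h, 'z) hist = "'h \<times> 'z list"

definition hist_set :: "('p, 's, 'h, 'u, 'z, 'w) game \<Rightarrow> nat \<Rightarrow> 'p \<Rightarrow> ('h, 'z) hist set" where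
  "hist_set G t i = {(h0, zs). h0 \<in> H1s G i \<and> length zs = t - 1 \<and>
                                (\<forall>s < t - 1. zs ! s \<in> Zs G (Suc s) i)}"

type_synonym ('h, 'z, 'u) strat = "nat \<Rightarrow> ('h, 'z) hist \<Rightarrow> 'u pmf"
type_synonym ('p, 'h, 'z, 'u) profile = "nat \<Rightarrow> 'p \<Rightarrow> ('h, 'z) hist \<Rightarrow> 'u pmf"

definition behavioral_strat :: "('p, 's, 'h, 'u, 'z, 'w) game \<Rightarrow> 'p \<Rightarrow> ('h, 'z, 'u) strat \<Rightarrow> bool" where
  "behavioral_strat G i gi \<longleftrightarrow>
     (\<forall>t\<in>{1..horizon G}. \<forall>h\<in>hist_set G t i. set_pmf (gi t h) \<subseteq> Us G t i)"

definition fully_mixed_strat :: "('p, 's, 'h, 'u, 'z, 'w) game \<Rightarrow> 'p \<Rightarrow> ('h, 'z, 'u) strat \<Rightarrow> bool" where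
  "fully_mixed_strat G i gi \<longleftrightarrow>
     (\<forall>t\<in>{1..horizon G}. \<forall>h\<in>hist_set G t i. set_pmf (gi t h) = Us G t i)"

definition behavioral_profile :: "('p, 's, 'h, 'u, 'z, 'w) game \<Rightarrow> ('p, 'h, 'z, 'u) profile \<Rightarrow> bool" where
  "behavioral_profile G g \<longleftrightarrow> (\<forall>i. behavioral_strat G i (\<lambda>t. g t i))"

definition with_strat :: "'p \<Rightarrow> ('h, 'z, 'u) strat \<Rightarrow> ('p, 'h, 'z, 'u) profile \<Rightarrow> ('p, 'h, 'z, 'u) profile" where
  "with_strat i gi g = (\<lambda>t j. if j = i then gi t else g t j)"

text \<open>Forget player i's component (so that a function of the result depends only on the others).\<close>
definition mask :: "'p \<Rightarrow> ('p \<Rightarrow> 'a) \<Rightarrow> ('p \<Rightarrow> 'a)" where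
  "mask i f = (\<lambda>j. if j = i then undefined else f j)"

definition mask_profile :: "'p \<Rightarrow> ('p, 'h, 'z, 'u) profile \<Rightarrow> ('p, 'h, 'z, 'u) profile" where
  "mask_profile i g = (\<lambda>t. mask i (g t))"

text \<open>A configuration after n steps (i.e. at time n+1): the state X_{n+1}, the histories
  H_{n+1}^j of all players, and the list of reward vectors R_1, ..., R_n.\<close>
type_synonym ('p, 's, 'h, 'z) config = "'s \<times> ('p \<Rightarrow> ('h, 'z) hist) \<times> ('p \<Rightarrow> real) list"

fun run :: "('p::finite, 's, 'h, 'u, 'z, 'w) game \<Rightarrow> ('p, 'h, 'z, 'u) profile \<Rightarrow> nat
             \<Rightarrow> ('p, 's, 'h, 'z) config pmf" where
  "run G g 0 = map_pmf (\<lambda>(x, h0). (x, \<lambda>j. (h0 j, []), [])) (init G)"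
| "run G g (Suc n) =
     bind_pmf (run G g n) (\<lambda>(x, hs, rs).
       bind_pmf (Pi_pmf UNIV undefined (\<lambda>j. g (Suc n) j (hs j))) (\<lambda>u.
         map_pmf (\<lambda>w. case dyn G (Suc n) x u w of (x', z, r) \<Rightarrow>
                          (x', \<lambda>j. (fst (hs j), snd (hs j) @ [z j]), rs @ [r]))
                 (noise G (Suc n))))"

definition cfg_state :: "('p, 's, 'h, 'z) config \<Rightarrow> 's" where "cfg_state c = fst c"
definition cfg_hist :: "('p, 's, 'h, 'z) config \<Rightarrow> 'p \<Rightarrow> ('h, 'z) hist" where "cfg_hist c = fst (snd c)"
definition cfg_rew :: "('p, 's, 'h, 'z) config \<Rightarrow> nat \<Rightarrow> 'p \<Rightarrow> real" where
  "cfg_rew c t i = (snd (snd c) ! (t - 1)) i"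

definition hist_at :: "nat \<Rightarrow> ('h, 'z) hist \<Rightarrow> ('h, 'z) hist" where
  "hist_at \<tau> h = (fst h, take (\<tau> - 1) (snd h))"

definition act_at :: "('p, 's, 'h, 'u, 'z, 'w) game \<Rightarrow> nat \<Rightarrow> 'p \<Rightarrow> ('h, 'z) hist \<Rightarrow> 'u" where
  "act_at G \<tau> i h = act G \<tau> i (snd h ! (\<tau> - 1))"

definition cprob :: "'a pmf \<Rightarrow> 'a set \<Rightarrow> 'a set \<Rightarrow> real" where
  "cprob M A B = measure_pmf.prob M (A \<inter> B) / measure_pmf.prob M B"

definition cexp :: "'a pmf \<Rightarrow> 'a set \<Rightarrow> ('a \<Rightarrow> real) \<Rightarrow> real" where
  "cexp M B X = measure_pmf.expectation M (\<lambda>c. indicator B c * X c) / measure_pmf.prob M B"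

fun kfold :: "(nat \<Rightarrow> 'p \<Rightarrow> 'k \<Rightarrow> 'z \<Rightarrow> 'k) \<Rightarrow> 'p \<Rightarrow> nat \<Rightarrow> 'k \<Rightarrow> 'z list \<Rightarrow> 'k" where
  "kfold iota i t k [] = k"
| "kfold iota i t k (z # zs) = kfold iota i (Suc t) (iota (Suc t) i k z) zs"

definition compress :: "('p \<Rightarrow> 'h \<Rightarrow> 'k) \<Rightarrow> (nat \<Rightarrow> 'p \<Rightarrow> 'k \<Rightarrow> 'z \<Rightarrow> 'k) \<Rightarrow> 'p \<Rightarrow> ('h, 'z) hist \<Rightarrow> 'k" where
  "compress iota1 iota i h = kfold iota i 1 (iota1 i (fst h)) (snd h)"

definition compression_wf :: "('p, 's, 'h, 'u, 'z, 'w) game \<Rightarrow> ('p \<Rightarrow> 'h \<Rightarrow> 'k)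
     \<Rightarrow> (nat \<Rightarrow> 'p \<Rightarrow> 'k \<Rightarrow> 'z \<Rightarrow> 'k) \<Rightarrow> (nat \<Rightarrow> 'p \<Rightarrow> 'k set) \<Rightarrow> bool" where
  "compression_wf G iota1 iota Ks \<longleftrightarrow>
     (\<forall>t i. finite (Ks t i)) \<and>
     (\<forall>i. \<forall>h0\<in>H1s G i. iota1 i h0 \<in> Ks 1 i) \<and>
     (\<forall>t i. \<forall>k\<in>Ks t i. \<forall>z\<in>Zs G t i. iota (Suc t) i k z \<in> Ks (Suc t) i)"

text \<open>F receives only player i's
  strategy, Phi only the strategies of the other players (player i's component masked).\<close>
definition usi :: "('p::finite, 's, 'h, 'u, 'z, 'w) game \<Rightarrow> ('p \<Rightarrow> 'h \<Rightarrow> 'k)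
     \<Rightarrow> (nat \<Rightarrow> 'p \<Rightarrow> 'k \<Rightarrow> 'z \<Rightarrow> 'k) \<Rightarrow> 'p \<Rightarrow> bool" where
  "usi G iota1 iota i \<longleftrightarrow>
     (\<exists>(F :: ('h, 'z, 'u) strat \<Rightarrow> nat \<Rightarrow> 'k \<Rightarrow> ('h, 'z) hist pmf)
       (Phi :: ('p, 'h, 'z, 'u) profile \<Rightarrow> nat \<Rightarrow> 'k \<Rightarrow> ('s \<times> ('p \<Rightarrow> ('h, 'z) hist)) pmf).
      \<forall>g. behavioral_profile G g \<longrightarrow>
        (\<forall>t\<in>{1..horizon G}. \<forall>k.
          let M = run G g (t - 1); Ek = {c. compress iota1 iota i (cfg_hist c i) = k} in
          measure_pmf.prob M Ek > 0 \<longrightarrow>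
          (\<forall>x hs. cprob M {c. cfg_state c = x \<and> cfg_hist c = hs} Ek
                  = pmf (F (\<lambda>t. g t i) t k) (hs i)
                    * pmf (Phi (mask_profile i g) t k) (x, mask i hs))))"

definition ev_hu :: "('p, 's, 'h, 'u, 'z, 'w) game \<Rightarrow> nat \<Rightarrow> 'p \<Rightarrow> ('h, 'z) hist \<Rightarrow> 'u
     \<Rightarrow> ('p, 's, 'h, 'z) config set" where
  "ev_hu G \<tau> i h u = {c. hist_at \<tau> (cfg_hist c i) = h \<and> act_at G \<tau> i (cfg_hist c i) = u}"

text \<open>The profile g supplies player i's strategy up to time \<tau>
  (these values are irrelevant by the context's remark); the max is written as a Sup.\<close>
definition Qfun :: "('p::finite, 's, 'h, 'u, 'z, 'w) game \<Rightarrow> ('p, 'h, 'z, 'u) profile \<Rightarrow> 'p \<Rightarrow> nat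
     \<Rightarrow> ('h, 'z) hist \<Rightarrow> 'u \<Rightarrow> real" where
  "Qfun G g i \<tau> h u =
     cexp (run G g (horizon G)) (ev_hu G \<tau> i h u) (\<lambda>c. cfg_rew c \<tau> i)
     + (SUP gt \<in> {gt. behavioral_strat G i gt}.
          cexp (run G (with_strat i (\<lambda>t. if t \<le> \<tau> then g t i else gt t) g) (horizon G))
               (ev_hu G \<tau> i h u) (\<lambda>c. \<Sum>t\<in>{\<tau>+1..horizon G}. cfg_rew c t i))"

end

theory Submission
  imports Defs
begin

text \<open>
  Given \<open>H\<^sub>\<tau>\<^sup>i = h\<close>, unilateral sufficiency makes the posterior of \<open>(X\<^sub>\<tau>, H\<^sub>\<tau>\<^sup>-\<^sup>i)\<close>
  the belief \<open>\<Phi>(\<cdot> | k)\<close> restricted to its masked support and renormalised, where \<open>k\<close> is the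
  compression of \<open>h\<close>; it depends on \<open>h\<close> only through \<open>k\<close> and not on player \<open>i\<close>'s strategy.
  Hence the expected reward at time \<open>\<tau>\<close> after action \<open>u\<close> is a belief average of a function of
  \<open>(X\<^sub>\<tau>, H\<^sub>\<tau>\<^sup>-\<^sup>i, u)\<close>. After time \<open>\<tau>\<close>, the run seen from \<open>h\<close> is the image of a run in
  which player \<open>i\<close>'s history restarts and \<open>i\<close>'s strategy reads it through the prefix \<open>h\<close>, so
  \<open>h\<close> enters the future rewards only through that strategy. Transplanting a strategy from the
  prefix \<open>h\<close> to a prefix \<open>h'\<close> with the same compression preserves the future rewards, so the
  suprema over strategies coincide as well. Rewards in \<open>[-1, 1]\<close> give \<open>|Q| \<le> T\<close>.
\<close>

section \<open>Expectations over finitely supported distributions\<close>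

lemma expectation_cong_set_pmf:
  "(\<And>x. x \<in> set_pmf M \<Longrightarrow> f x = g x) \<Longrightarrow> measure_pmf.expectation M f = (measure_pmf.expectation M g :: real)"
  by (rule integral_cong_AE) (auto simp: AE_measure_pmf_iff)

lemma expectation_bind_pmf_finite:
  fixes f :: "'b \<Rightarrow> real"
  assumes M: "finite (set_pmf M)" and K: "\<And>x. x \<in> set_pmf M \<Longrightarrow> finite (set_pmf (K x))"
  shows "measure_pmf.expectation (bind_pmf M K) f
    = measure_pmf.expectation M (\<lambda>x. measure_pmf.expectation (K x) f)"
proof -
  have "measure_pmf.expectation (bind_pmf M K) f
      = (\<Sum>a\<in>set_pmf M. pmf M a *\<^sub>R measure_pmf.expectation (K a) f)"
    by (rule pmf_expectation_bind[OF M K subset_refl])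
  also have "\<dots> = measure_pmf.expectation M (\<lambda>x. measure_pmf.expectation (K x) f)"
    by (rule integral_measure_pmf[OF M, symmetric]) auto
  finally show ?thesis .
qed

lemma expectation_indicator_singleton:
  "measure_pmf.expectation M (\<lambda>y. indicator {u} y * f y) = pmf M u * (f u :: real)"
  by (subst integral_measure_pmf_real[of "{u}"]) (auto simp: indicator_def)

lemma finite_set_Pi_pmf: "finite A \<Longrightarrow> (\<And>j. finite (set_pmf (P j))) \<Longrightarrow> finite (set_pmf (Pi_pmf A d P))"
  by (subst set_Pi_pmf) (auto intro!: finite_PiE_dflt)

lemma Pi_pmf_memD: "finite A \<Longrightarrow> a \<in> set_pmf (Pi_pmf A d P) \<Longrightarrow> j \<in> A \<Longrightarrow> a j \<in> set_pmf (P j)"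
  by (subst (asm) set_Pi_pmf) (auto simp: PiE_dflt_def)

lemma expectation_Pi_pmf_coordinate:
  fixes P :: "'p::finite \<Rightarrow> 'u pmf" and K :: "('p \<Rightarrow> 'u) \<Rightarrow> real"
  assumes fin: "\<And>j. finite (set_pmf (P j))"
  shows "measure_pmf.expectation (Pi_pmf UNIV d P) (\<lambda>a. indicator {u} (a i) * K a)
     = pmf (P i) u * measure_pmf.expectation (Pi_pmf (UNIV - {i}) d P) (\<lambda>f. K (f(i := u)))"
proof -
  let ?B = "Pi_pmf (UNIV - {i}) d P"
  have "Pi_pmf UNIV d P = Pi_pmf (insert i (UNIV - {i})) d P"
    by (simp add: insert_absorb)
  also have "\<dots> = bind_pmf (P i) (\<lambda>y. map_pmf (\<lambda>f. f(i := y)) ?B)"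
    by (subst Pi_pmf_insert') (simp_all add: map_pmf_def)
  finally have "measure_pmf.expectation (Pi_pmf UNIV d P) (\<lambda>a. indicator {u} (a i) * K a)
      = measure_pmf.expectation (P i) (\<lambda>y. indicator {u} y * measure_pmf.expectation ?B (\<lambda>f. K (f(i := y))))"
    using fin by (simp add: expectation_bind_pmf_finite finite_set_Pi_pmf)
  then show ?thesis
    by (simp add: expectation_indicator_singleton)
qed

lemma Pi_pmf_others_fun_upd:
  "Pi_pmf (UNIV - {i}) d (\<lambda>j. p j ((hs(i := v)) j)) = Pi_pmf (UNIV - {i}) d (\<lambda>j. p j (hs j))"
  by (rule Pi_pmf_cong) auto

lemma cexp_abs_le:
  fixes X :: "'a \<Rightarrow> real"
  assumes fin: "finite (set_pmf M)" and pos: "measure_pmf.prob M A > 0"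
    and bound: "\<And>c. c \<in> set_pmf M \<Longrightarrow> c \<in> A \<Longrightarrow> \<bar>X c\<bar> \<le> L"
  shows "\<bar>cexp M A X\<bar> \<le> L"
proof -
  have int: "integrable (measure_pmf M) f" for f :: "'a \<Rightarrow> real"
    using fin by (rule integrable_measure_pmf_finite)
  have "\<bar>measure_pmf.expectation M (\<lambda>c. indicator A c * X c)\<bar>
      \<le> measure_pmf.expectation M (\<lambda>c. \<bar>indicator A c * X c\<bar>)"
    using integral_norm_bound[of M "\<lambda>c. indicator A c * X c"] by simp
  also have "\<dots> \<le> measure_pmf.expectation M (\<lambda>c. indicator A c * L)"
    by (rule integral_mono_AE[OF int int]) (auto simp: AE_measure_pmf_iff indicator_def bound abs_mult)
  also have "\<dots> = measure_pmf.prob M A * L" by simp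
  finally show ?thesis
    using pos unfolding cexp_def by (simp add: divide_le_eq abs_div mult.commute)
qed

lemma abs_SUP_le:
  fixes f :: "'a \<Rightarrow> real"
  assumes "A \<noteq> {}" "\<And>a. a \<in> A \<Longrightarrow> \<bar>f a\<bar> \<le> L"
  shows "\<bar>SUP a\<in>A. f a\<bar> \<le> L"
proof -
  have bdd: "bdd_above (f ` A)" using assms(2) by (meson abs_le_D1 bdd_aboveI2)
  obtain a where "a \<in> A" using assms(1) by blast
  then have "- L \<le> (SUP a\<in>A. f a)"
    using assms(2)[of a] cSUP_upper[OF _ bdd, of a] by linarith
  moreover have "(SUP a\<in>A. f a) \<le> L"
    using assms by (intro cSUP_least) (auto dest: abs_le_D1)
  ultimately show ?thesis by simp
qed

section \<open>Transitions of a run\<close>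

definition next_config :: "('p, 's, 'h, 'u, 'z, 'w) game \<Rightarrow> nat \<Rightarrow> ('p, 's, 'h, 'z) config
    \<Rightarrow> ('p \<Rightarrow> 'u) \<Rightarrow> 'w \<Rightarrow> ('p, 's, 'h, 'z) config" where
  "next_config G t c a w = (case c of (x, hs, rs) \<Rightarrow> case dyn G t x a w of (x', z, r) \<Rightarrow>
     (x', \<lambda>j. (fst (hs j), snd (hs j) @ [z j]), rs @ [r]))"

definition step :: "('p::finite, 's, 'h, 'u, 'z, 'w) game \<Rightarrow> ('p, 'h, 'z, 'u) profile \<Rightarrow> nat
    \<Rightarrow> ('p, 's, 'h, 'z) config \<Rightarrow> ('p, 's, 'h, 'z) config pmf" where
  "step G p t c = bind_pmf (Pi_pmf UNIV undefined (\<lambda>j. p t j (cfg_hist c j)))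
     (\<lambda>a. map_pmf (next_config G t c a) (noise G t))"

text \<open>Starting from a configuration at time \<open>n + 1\<close>, \<open>run_from G p n m\<close> performs the
  transitions at times \<open>n + 1, \<dots>, n + m\<close>.\<close>
fun run_from :: "('p::finite, 's, 'h, 'u, 'z, 'w) game \<Rightarrow> ('p, 'h, 'z, 'u) profile \<Rightarrow> nat \<Rightarrow> nat
    \<Rightarrow> ('p, 's, 'h, 'z) config \<Rightarrow> ('p, 's, 'h, 'z) config pmf" where
  "run_from G p n 0 c = return_pmf c"
| "run_from G p n (Suc m) c = bind_pmf (step G p (Suc n) c) (run_from G p (Suc n) m)"

lemma run_Suc_step: "run G p (Suc n) = bind_pmf (run G p n) (step G p (Suc n))"
  unfolding run.simps step_def
  by (intro bind_pmf_cong refl)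
     (auto simp: cfg_hist_def next_config_def intro!: bind_pmf_cong map_pmf_cong)

lemma run_add: "run G p (n + m) = bind_pmf (run G p n) (run_from G p n m)"
proof (induction m arbitrary: n)
  case 0
  then show ?case by (simp add: bind_return_pmf')
next
  case (Suc m)
  have "run G p (n + Suc m) = bind_pmf (run G p (Suc n)) (run_from G p (Suc n) m)"
    using Suc.IH[of "Suc n"] by simp
  also have "\<dots> = bind_pmf (run G p n) (\<lambda>c. bind_pmf (step G p (Suc n) c) (run_from G p (Suc n) m))"
    by (simp only: run_Suc_step bind_assoc_pmf)
  also have "\<dots> = bind_pmf (run G p n) (run_from G p n (Suc m))"
    by (rule bind_pmf_cong) simp_all
  finally show ?case .
qed

lemma step_cong: "p t = p' t \<Longrightarrow> step G p t = step G p' t"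
  unfolding step_def by (simp only:)

lemma run_cong: "(\<And>t. t \<le> n \<Longrightarrow> p t = p' t) \<Longrightarrow> run G p n = run G p' n"
proof (induction n)
  case (Suc n)
  then have "run G p n = run G p' n" and "step G p (Suc n) = step G p' (Suc n)"
    by (simp_all add: step_cong[of p "Suc n" p'])
  then show ?case by (simp only: run_Suc_step)
qed simp

lemma run_from_cong: "(\<And>t. t > n \<Longrightarrow> p t = p' t) \<Longrightarrow> run_from G p n m = run_from G p' n m"
proof (induction m arbitrary: n)
  case (Suc m)
  have "run_from G p (Suc n) m = run_from G p' (Suc n) m" and "step G p (Suc n) = step G p' (Suc n)"
    using Suc by (simp_all add: step_cong[of p "Suc n" p'])
  then show ?case by (intro ext) simp
qed (intro ext, simp)

lemma run_from_map:
  assumes "\<And>t c. step G p t (\<Psi> c) = map_pmf \<Psi> (step G p' t c)"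
  shows "run_from G p n m (\<Psi> c) = map_pmf \<Psi> (run_from G p' n m c)"
proof (induction m arbitrary: n c)
  case (Suc m)
  then show ?case by (simp add: assms bind_map_pmf map_bind_pmf)
qed simp

lemma set_pmf_step:
  "c' \<in> set_pmf (step G p t c) \<Longrightarrow> \<exists>a w. a \<in> set_pmf (Pi_pmf UNIV undefined (\<lambda>j. p t j (cfg_hist c j)))
     \<and> w \<in> set_pmf (noise G t) \<and> c' = next_config G t c a w"
  by (auto simp: step_def)

lemma next_config_simps:
  "cfg_state (next_config G t c a w) = fst (dyn G t (cfg_state c) a w)"
  "cfg_hist (next_config G t c a w) j = (fst (cfg_hist c j), snd (cfg_hist c j) @ [fst (snd (dyn G t (cfg_state c) a w)) j])"
  "snd (snd (next_config G t c a w)) = snd (snd c) @ [snd (snd (dyn G t (cfg_state c) a w))]"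
  by (cases c; cases "dyn G t (cfg_state c) a w"; simp add: next_config_def cfg_state_def cfg_hist_def)+

lemma run_from_extends:
  assumes "c' \<in> set_pmf (run_from G p n m c)"
  shows "\<exists>zs. cfg_hist c' j = (fst (cfg_hist c j), snd (cfg_hist c j) @ zs)"
    and "\<exists>rs. snd (snd c') = snd (snd c) @ rs"
proof -
  have "(\<exists>zs. cfg_hist c' j = (fst (cfg_hist c j), snd (cfg_hist c j) @ zs))
     \<and> (\<exists>rs. snd (snd c') = snd (snd c) @ rs)"
    using assms
  proof (induction m arbitrary: n c)
    case (Suc m)
    then obtain c1 where "c1 \<in> set_pmf (step G p (Suc n) c)" "c' \<in> set_pmf (run_from G p (Suc n) m c1)"
      by auto
    then obtain a w where "c' \<in> set_pmf (run_from G p (Suc n) m (next_config G (Suc n) c a w))"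
      using set_pmf_step by blast
    with Suc.IH show ?case by (fastforce simp: next_config_simps)
  qed (simp, metis append_Nil2 prod.collapse)
  then show "\<exists>zs. cfg_hist c' j = (fst (cfg_hist c j), snd (cfg_hist c j) @ zs)"
    and "\<exists>rs. snd (snd c') = snd (snd c) @ rs" by blast+
qed

lemma cfg_rew_next_config:
  "length (snd (snd c)) = t - 1 \<Longrightarrow> 1 \<le> t \<Longrightarrow>
    cfg_rew (next_config G t c a w) t i = snd (snd (dyn G t (cfg_state c) a w)) i"
  by (simp add: cfg_rew_def next_config_simps nth_append)

lemma expectation_run_from_cfg_rew:
  assumes "t - 1 < length (snd (snd c))"
  shows "measure_pmf.expectation (run_from G p n m c) (\<lambda>c'. cfg_rew c' t i) = cfg_rew c t i"
proof -
  have "measure_pmf.expectation (run_from G p n m c) (\<lambda>c'. cfg_rew c' t i)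
      = measure_pmf.expectation (run_from G p n m c) (\<lambda>_. cfg_rew c t i)"
  proof (rule expectation_cong_set_pmf)
    fix c' assume "c' \<in> set_pmf (run_from G p n m c)"
    then obtain rs where "snd (snd c') = snd (snd c) @ rs" using run_from_extends(2) by blast
    then show "cfg_rew c' t i = cfg_rew c t i" using assms by (simp add: cfg_rew_def nth_append)
  qed
  then show ?thesis by simp
qed

lemma ev_hu_run_from_iff:
  assumes "c' \<in> set_pmf (run_from G p n m c)" "\<tau> - 1 < length (snd (cfg_hist c i))"
  shows "c' \<in> ev_hu G \<tau> i h u \<longleftrightarrow> c \<in> ev_hu G \<tau> i h u"
proof -
  obtain zs where "cfg_hist c' i = (fst (cfg_hist c i), snd (cfg_hist c i) @ zs)"
    using run_from_extends(1)[OF assms(1)] by blast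
  then show ?thesis
    using assms(2) by (simp add: ev_hu_def hist_at_def act_at_def nth_append)
qed

lemma expectation_run_from_indicator_ev_hu:
  fixes X :: "('p::finite, 's, 'h, 'z) config \<Rightarrow> real"
  assumes "\<tau> - 1 < length (snd (cfg_hist c i))"
  shows "measure_pmf.expectation (run_from G p n m c) (\<lambda>c'. indicator (ev_hu G \<tau> i h u) c' * X c')
    = indicator (ev_hu G \<tau> i h u) c * measure_pmf.expectation (run_from G p n m c) X"
proof -
  have "measure_pmf.expectation (run_from G p n m c) (\<lambda>c'. indicator (ev_hu G \<tau> i h u) c' * X c')
      = measure_pmf.expectation (run_from G p n m c) (\<lambda>c'. indicator (ev_hu G \<tau> i h u) c * X c')"
    by (rule expectation_cong_set_pmf) (simp add: indicator_def ev_hu_run_from_iff[OF _ assms])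
  then show ?thesis by simp
qed

lemma next_config_in_ev_hu_iff:
  assumes "length (snd (cfg_hist c i)) = \<tau> - 1" "1 \<le> \<tau>"
    and "act G \<tau> i (fst (snd (dyn G \<tau> (cfg_state c) a w)) i) = a i"
  shows "next_config G \<tau> c a w \<in> ev_hu G \<tau> i h u \<longleftrightarrow> cfg_hist c i = h \<and> a i = u"
  using assms by (simp add: ev_hu_def hist_at_def act_at_def next_config_simps nth_append)

definition continuation_value :: "('p::finite, 's, 'h, 'u, 'z, 'w) game \<Rightarrow> ('p, 'h, 'z, 'u) profile
    \<Rightarrow> nat \<Rightarrow> 'p \<Rightarrow> 'u \<Rightarrow> ('p, 's, 'h, 'z) config \<Rightarrow> (('p, 's, 'h, 'z) config \<Rightarrow> real) \<Rightarrow> real" where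
  "continuation_value G q \<tau> i u c X =
     measure_pmf.expectation (Pi_pmf (UNIV - {i}) undefined (\<lambda>j. q \<tau> j (cfg_hist c j)))
       (\<lambda>f. measure_pmf.expectation (noise G \<tau>) (\<lambda>w.
          measure_pmf.expectation (run_from G q \<tau> (horizon G - \<tau>) (next_config G \<tau> c (f(i := u)) w)) X))"

section \<open>Continuations in relative coordinates\<close>

text \<open>Relative coordinates for the continuation after player \<open>i\<close>'s history \<open>h\<close>:
  \<open>relative_next\<close> restarts player \<open>i\<close>'s history at the new observation and empties the
  reward list, \<open>attach_prefix\<close> restores \<open>h\<close> and the past rewards, and under
  \<open>shift_profile\<close> player \<open>i\<close> reads relative histories through \<open>h\<close>.\<close>
definition relative_next :: "('p, 's, 'h, 'u, 'z, 'w) game \<Rightarrow> 'p \<Rightarrow> nat \<Rightarrow> 's \<Rightarrow> ('p \<Rightarrow> ('h, 'z) hist)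
    \<Rightarrow> ('p \<Rightarrow> 'u) \<Rightarrow> 'w \<Rightarrow> ('p, 's, 'h, 'z) config" where
  "relative_next G i t x hs a w = (case dyn G t x a w of (x', z, r) \<Rightarrow>
     (x', (\<lambda>j. (fst (hs j), snd (hs j) @ [z j]))(i := (undefined, [z i])), []))"

definition attach_prefix :: "'p \<Rightarrow> ('h, 'z) hist \<Rightarrow> ('p \<Rightarrow> real) list \<Rightarrow> ('p, 's, 'h, 'z) config
    \<Rightarrow> ('p, 's, 'h, 'z) config" where
  "attach_prefix i h rs c =
     (cfg_state c, (cfg_hist c)(i := (fst h, snd h @ snd (cfg_hist c i))), rs @ snd (snd c))"

definition shift_profile :: "'p \<Rightarrow> ('h, 'z) hist \<Rightarrow> ('p, 'h, 'z, 'u) profile \<Rightarrow> ('p, 'h, 'z, 'u) profile" where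
  "shift_profile i h p = with_strat i (\<lambda>t hh. p t i (fst h, snd h @ snd hh)) p"

lemma relative_next_fun_upd: "relative_next G i t x (hs(i := v)) a w = relative_next G i t x hs a w"
  by (simp add: relative_next_def fun_eq_iff split: prod.split)

lemma next_config_eq_attach_prefix:
  assumes "cfg_hist c i = h"
  shows "next_config G t c a w = attach_prefix i h (snd (snd c) @ [snd (snd (dyn G t (cfg_state c) a w))])
    (relative_next G i t (cfg_state c) (cfg_hist c) a w)"
  using assms
  by (cases c; cases "dyn G t (cfg_state c) a w")
     (auto simp: next_config_def attach_prefix_def relative_next_def cfg_hist_def cfg_state_def fun_eq_iff)

lemma step_attach_prefix:
  "step G p t (attach_prefix i h rs c) = map_pmf (attach_prefix i h rs) (step G (shift_profile i h p) t c)"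
proof -
  have "Pi_pmf UNIV undefined (\<lambda>j. p t j (cfg_hist (attach_prefix i h rs c) j))
      = Pi_pmf UNIV undefined (\<lambda>j. shift_profile i h p t j (cfg_hist c j))"
    by (rule Pi_pmf_cong) (auto simp: attach_prefix_def shift_profile_def with_strat_def cfg_hist_def)
  moreover have "next_config G t (attach_prefix i h rs c) a = attach_prefix i h rs \<circ> next_config G t c a" for a
    by (cases c) (auto simp: next_config_def attach_prefix_def cfg_state_def cfg_hist_def fun_eq_iff
        split: prod.split)
  ultimately show ?thesis
    by (simp add: step_def map_bind_pmf map_pmf_comp comp_def)
qed

lemma run_from_attach_prefix:
  "run_from G p n m (attach_prefix i h rs c)
    = map_pmf (attach_prefix i h rs) (run_from G (shift_profile i h p) n m c)"
  by (rule run_from_map) (rule step_attach_prefix)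

section \<open>Conditioning on a factorized history\<close>

text \<open>\<open>\<Phi>\<close> is only ever evaluated at masked histories, whose \<open>i\<close>-th entry is \<open>undefined\<close>,
  so only this part of its support matters.\<close>
definition belief_support :: "('s \<times> ('p \<Rightarrow> 'a)) pmf \<Rightarrow> 'p \<Rightarrow> ('s \<times> ('p \<Rightarrow> 'a)) set" where
  "belief_support \<Phi> i = {y \<in> set_pmf \<Phi>. snd y i = undefined}"

lemma mask_fun_upd: "m i = undefined \<Longrightarrow> mask i (m(i := v)) = m"
  by (auto simp: mask_def fun_eq_iff)

lemma fun_upd_mask: "(mask i hs)(i := hs i) = hs"
  by (auto simp: mask_def fun_eq_iff)

context
  fixes M :: "('p, 's, 'h, 'z) config pmf" and Ek :: "('p, 's, 'h, 'z) config set"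
    and Fk :: "('h, 'z) hist pmf" and \<Phi> :: "('s \<times> ('p \<Rightarrow> ('h, 'z) hist)) pmf"
    and i :: 'p and h :: "('h, 'z) hist"
  assumes finite_M: "finite (set_pmf M)"
    and factorization: "\<And>x hs. cprob M {c. cfg_state c = x \<and> cfg_hist c = hs} Ek
          = pmf Fk (hs i) * pmf \<Phi> (x, mask i hs)"
    and hist_in_Ek: "{c. cfg_hist c i = h} \<subseteq> Ek"
    and prob_hist_pos: "measure_pmf.prob M {c. cfg_hist c i = h} > 0"
begin

private definition "state_hist = map_pmf (\<lambda>c. (cfg_state c, cfg_hist c)) M"

private lemma prob_Ek_pos: "measure_pmf.prob M Ek > 0"
  using prob_hist_pos measure_pmf.finite_measure_mono[OF hist_in_Ek, of M] by simp

private lemma pmf_state_hist: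
  assumes "hs i = h"
  shows "pmf state_hist (x, hs) = measure_pmf.prob M Ek * pmf Fk h * pmf \<Phi> (x, mask i hs)"
proof -
  let ?A = "{c. cfg_state c = x \<and> cfg_hist c = hs}"
  have "pmf state_hist (x, hs) = measure_pmf.prob M ?A"
    by (simp add: state_hist_def pmf_map vimage_def)
  moreover have "?A \<inter> Ek = ?A" using hist_in_Ek assms by auto
  ultimately show ?thesis
    using factorization[of x hs] prob_Ek_pos assms by (simp add: cprob_def field_simps)
qed

private lemma finite_hist_support: "finite (set_pmf state_hist \<inter> {y. snd y i = h})"
  using finite_M by (simp add: state_hist_def)

lemma pmf_Fk_pos: "pmf Fk h > 0"
proof -
  have "measure_pmf.prob M {c. cfg_hist c i = h} = measure_pmf.prob state_hist {y. snd y i = h}"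
    by (simp add: state_hist_def vimage_def)
  also have "\<dots> = measure_pmf.prob state_hist (set_pmf state_hist \<inter> {y. snd y i = h})"
    using measure_Int_set_pmf[of state_hist "{y. snd y i = h}"] by (simp add: Int_commute)
  also have "\<dots> = (\<Sum>y\<in>set_pmf state_hist \<inter> {y. snd y i = h}. pmf state_hist y)"
    using finite_hist_support by (simp add: measure_measure_pmf_finite)
  also have "\<dots> = pmf Fk h * (\<Sum>y\<in>set_pmf state_hist \<inter> {y. snd y i = h}.
      measure_pmf.prob M Ek * pmf \<Phi> (fst y, mask i (snd y)))"
    unfolding sum_distrib_left by (rule sum.cong) (auto simp: pmf_state_hist)
  finally have "pmf Fk h \<noteq> 0" using prob_hist_pos by auto
  then show ?thesis by (simp add: order_less_le)
qed

private lemma bij_betw_belief_support: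
  "bij_betw (\<lambda>y. (fst y, (snd y)(i := h))) (belief_support \<Phi> i) (set_pmf state_hist \<inter> {y. snd y i = h})"
proof (rule bij_betw_byWitness[where f' = "\<lambda>y. (fst y, mask i (snd y))"])
  show "\<forall>y\<in>belief_support \<Phi> i. (fst (fst y, (snd y)(i := h)), mask i (snd (fst y, (snd y)(i := h)))) = y"
    by (simp add: belief_support_def mask_fun_upd)
  show "\<forall>y\<in>set_pmf state_hist \<inter> {y. snd y i = h}. (fst (fst y, mask i (snd y)), (snd (fst y, mask i (snd y)))(i := h)) = y"
    using fun_upd_mask by auto
  show "(\<lambda>y. (fst y, (snd y)(i := h))) ` belief_support \<Phi> i \<subseteq> set_pmf state_hist \<inter> {y. snd y i = h}"
    using pmf_state_hist prob_Ek_pos pmf_Fk_pos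
    by (auto simp: belief_support_def mask_fun_upd set_pmf_iff)
  show "(\<lambda>y. (fst y, mask i (snd y))) ` (set_pmf state_hist \<inter> {y. snd y i = h}) \<subseteq> belief_support \<Phi> i"
  proof
    fix y assume "y \<in> (\<lambda>y. (fst y, mask i (snd y))) ` (set_pmf state_hist \<inter> {y. snd y i = h})"
    then obtain x hs where "pmf state_hist (x, hs) \<noteq> 0" "hs i = h" "y = (x, mask i hs)"
      by (auto simp: set_pmf_iff)
    then show "y \<in> belief_support \<Phi> i"
      using pmf_state_hist[of hs x] by (simp add: belief_support_def set_pmf_iff mask_def)
  qed
qed

lemma expectation_hist_factorization:
  assumes "\<And>c. c \<in> set_pmf M \<Longrightarrow> cfg_hist c i = h \<Longrightarrow> \<Theta> c = \<Xi> (cfg_state c) (cfg_hist c)"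
  shows "measure_pmf.expectation M (\<lambda>c. indicator {c. cfg_hist c i = h} c * \<Theta> c)
    = measure_pmf.prob M Ek * pmf Fk h * (\<Sum>y\<in>belief_support \<Phi> i. pmf \<Phi> y * \<Xi> (fst y) ((snd y)(i := h)))"
proof -
  let ?S = "set_pmf state_hist \<inter> {y. snd y i = h}"
  have "measure_pmf.expectation M (\<lambda>c. indicator {c. cfg_hist c i = h} c * \<Theta> c)
      = measure_pmf.expectation state_hist (\<lambda>y. indicator {y. snd y i = h} y * \<Xi> (fst y) (snd y))"
    using assms by (auto simp: state_hist_def indicator_def intro!: expectation_cong_set_pmf)
  also have "\<dots> = (\<Sum>y\<in>?S. \<Xi> (fst y) (snd y) * pmf state_hist y)"
    using finite_hist_support by (subst integral_measure_pmf_real[of ?S]) (auto simp: indicator_def)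
  also have "\<dots> = (\<Sum>y\<in>belief_support \<Phi> i. \<Xi> (fst y) ((snd y)(i := h)) * pmf state_hist (fst y, (snd y)(i := h)))"
    unfolding sum.reindex_bij_betw[OF bij_betw_belief_support, symmetric] by simp
  also have "\<dots> = measure_pmf.prob M Ek * pmf Fk h * (\<Sum>y\<in>belief_support \<Phi> i. pmf \<Phi> y * \<Xi> (fst y) ((snd y)(i := h)))"
    by (simp add: sum_distrib_left pmf_state_hist belief_support_def mask_fun_upd ac_simps)
  finally show ?thesis .
qed

end

section \<open>Well-formed games\<close>

definition config_wf :: "('p, 's, 'h, 'u, 'z, 'w) game \<Rightarrow> nat \<Rightarrow> ('p, 's, 'h, 'z) config \<Rightarrow> bool" where
  "config_wf G n c \<longleftrightarrow> cfg_state c \<in> Xs G (Suc n) \<and> (\<forall>j. cfg_hist c j \<in> hist_set G (Suc n) j)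
     \<and> length (snd (snd c)) = n \<and> (\<forall>r\<in>set (snd (snd c)). \<forall>j. r j \<in> {-1..1})"

lemma hist_set_length: "hh \<in> hist_set G t j \<Longrightarrow> length (snd hh) = t - 1"
  by (auto simp: hist_set_def)

lemma hist_set_snoc:
  "hh \<in> hist_set G (Suc n) j \<Longrightarrow> z \<in> Zs G (Suc n) j \<Longrightarrow> (fst hh, snd hh @ [z]) \<in> hist_set G (Suc (Suc n)) j"
  unfolding hist_set_def by (auto simp: nth_append less_Suc_eq)

lemma hist_set_replace_prefix:
  assumes h: "h \<in> hist_set G \<tau> i" and hh: "hh \<in> hist_set G t i" and le: "\<tau> - 1 \<le> length (snd hh)"
  shows "(fst h, snd h @ drop (\<tau> - 1) (snd hh)) \<in> hist_set G t i"
proof -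
  have "(snd h @ drop (\<tau> - 1) (snd hh)) ! s \<in> Zs G (Suc s) i" if "s < t - 1" for s
    using h hh le that by (cases "s < \<tau> - 1") (auto simp: hist_set_def nth_append)
  then show ?thesis using h hh le by (auto simp: hist_set_def)
qed

lemma behavioral_profile_set_pmf:
  "behavioral_profile G p \<Longrightarrow> t \<in> {1..horizon G} \<Longrightarrow> hh \<in> hist_set G t j \<Longrightarrow> set_pmf (p t j hh) \<subseteq> Us G t j"
  unfolding behavioral_profile_def behavioral_strat_def by blast

lemma abs_cfg_rew_le:
  assumes "config_wf G n c" "1 \<le> t" "t \<le> n"
  shows "\<bar>cfg_rew c t i\<bar> \<le> 1"
proof -
  have "snd (snd c) ! (t - 1) \<in> set (snd (snd c))"
    using assms by (simp add: config_wf_def)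
  then have "cfg_rew c t i \<in> {-1..1}"
    using assms(1) by (simp add: config_wf_def cfg_rew_def)
  then show ?thesis by auto
qed

locale finite_game =
  fixes G :: "('p::finite, 's, 'h, 'u, 'z, 'w) game"
  assumes wf: "game_wf G"
begin

lemma finite_Us: "finite (Us G t j)"
  using wf by (simp add: game_wf_def)

lemma finite_noise: "finite (set_pmf (noise G t))"
  using wf by (simp add: game_wf_def)

lemma finite_init: "finite (set_pmf (init G))"
proof (rule finite_subset)
  show "set_pmf (init G) \<subseteq> Xs G 1 \<times> PiE UNIV (H1s G)"
    using wf by (simp add: game_wf_def PiE_UNIV_domain Pi_def)
  show "finite (Xs G 1 \<times> PiE UNIV (H1s G))"
    using wf by (simp add: game_wf_def finite_PiE)
qed

lemma dyn_wf:
  assumes "t \<in> {1..horizon G}" "x \<in> Xs G t" "\<forall>j. a j \<in> Us G t j" "w \<in> set_pmf (noise G t)"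
    and "dyn G t x a w = (x', z, r)"
  shows "x' \<in> Xs G (Suc t) \<and> (\<forall>j. z j \<in> Zs G t j \<and> act G t j (z j) = a j \<and> r j \<in> {-1..1})"
proof -
  have "\<forall>t\<in>{1..horizon G}. \<forall>x\<in>Xs G t. \<forall>u. (\<forall>i. u i \<in> Us G t i) \<longrightarrow>
      (\<forall>w\<in>set_pmf (noise G t). case dyn G t x u w of (x', z, r) \<Rightarrow>
         x' \<in> Xs G (Suc t) \<and> (\<forall>i. z i \<in> Zs G t i \<and> act G t i (z i) = u i \<and> r i \<in> {-1..1}))"
    using wf unfolding game_wf_def by (elim conjE)
  from this[rule_format, OF assms(1,2) assms(3)[rule_format] assms(4)] show ?thesis using assms(5) by simp
qed

lemma joint_action_finite:
  assumes "behavioral_profile G p" "t \<in> {1..horizon G}" "\<forall>j. hs j \<in> hist_set G t j"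
  shows "finite (set_pmf (Pi_pmf A d (\<lambda>j. p t j (hs j))))"
proof (rule finite_set_Pi_pmf)
  show "finite (set_pmf (p t j (hs j)))" for j
    using behavioral_profile_set_pmf[OF assms(1,2) assms(3)[rule_format]] finite_Us
    by (rule finite_subset)
qed simp

lemma joint_action_in_Us:
  assumes "behavioral_profile G p" "t \<in> {1..horizon G}" "\<forall>j. hs j \<in> hist_set G t j"
    and "a \<in> set_pmf (Pi_pmf UNIV d (\<lambda>j. p t j (hs j)))"
  shows "a j \<in> Us G t j"
  using behavioral_profile_set_pmf[OF assms(1,2) assms(3)[rule_format]] Pi_pmf_memD[OF _ assms(4)]
  by auto

lemma step_finite:
  assumes "behavioral_profile G p" "Suc n \<le> horizon G" "config_wf G n c"
  shows "finite (set_pmf (step G p (Suc n) c))"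
proof -
  have "finite (set_pmf (Pi_pmf UNIV undefined (\<lambda>j. p (Suc n) j (cfg_hist c j))))"
    using assms by (intro joint_action_finite) (simp_all add: config_wf_def)
  then show ?thesis by (simp add: step_def finite_noise)
qed

lemma step_config_wf:
  assumes p: "behavioral_profile G p" and n: "Suc n \<le> horizon G" and c: "config_wf G n c"
    and c': "c' \<in> set_pmf (step G p (Suc n) c)"
  shows "config_wf G (Suc n) c'"
proof -
  have t: "Suc n \<in> {1..horizon G}" using n by simp
  have hs: "\<forall>j. cfg_hist c j \<in> hist_set G (Suc n) j" using c by (simp add: config_wf_def)
  from set_pmf_step[OF c'] obtain a w where
    a: "a \<in> set_pmf (Pi_pmf UNIV undefined (\<lambda>j. p (Suc n) j (cfg_hist c j)))"
    and w: "w \<in> set_pmf (noise G (Suc n))" and c'_eq: "c' = next_config G (Suc n) c a w"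
    by blast
  obtain x' z r where d: "dyn G (Suc n) (cfg_state c) a w = (x', z, r)"
    by (cases "dyn G (Suc n) (cfg_state c) a w")
  have D: "x' \<in> Xs G (Suc (Suc n)) \<and> (\<forall>j. z j \<in> Zs G (Suc n) j \<and> r j \<in> {-1..1})"
    using dyn_wf[OF t _ _ w d] joint_action_in_Us[OF p t hs a] c by (simp add: config_wf_def)
  have "(fst (cfg_hist c j), snd (cfg_hist c j) @ [z j]) \<in> hist_set G (Suc (Suc n)) j" for j
    using hs D by (intro hist_set_snoc) auto
  then show ?thesis
    using c D
    using c by (auto simp: c'_eq config_wf_def next_config_simps d)
qed

lemma run_finite_config_wf:
  assumes p: "behavioral_profile G p"
  shows "n \<le> horizon G \<Longrightarrow> finite (set_pmf (run G p n)) \<and> (\<forall>c\<in>set_pmf (run G p n). config_wf G n c)"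
proof (induction n)
  case 0
  have "set_pmf (init G) \<subseteq> Xs G 1 \<times> {h. \<forall>i. h i \<in> H1s G i}"
    using wf by (simp add: game_wf_def)
  then show ?case
    using finite_init by (auto simp: config_wf_def cfg_state_def cfg_hist_def hist_set_def)
next
  case (Suc n)
  then show ?case
    using step_finite[OF p Suc.prems] step_config_wf[OF p Suc.prems]
    by (auto simp: run_Suc_step set_bind_pmf simp del: run.simps)
qed

lemma finite_set_run: "behavioral_profile G p \<Longrightarrow> n \<le> horizon G \<Longrightarrow> finite (set_pmf (run G p n))"
  and run_config_wf: "behavioral_profile G p \<Longrightarrow> n \<le> horizon G \<Longrightarrow> c \<in> set_pmf (run G p n) \<Longrightarrow> config_wf G n c"
  using run_finite_config_wf by blast+

lemma run_from_finite:
  assumes p: "behavioral_profile G p"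
  shows "n + m \<le> horizon G \<Longrightarrow> config_wf G n c \<Longrightarrow> finite (set_pmf (run_from G p n m c))"
proof (induction m arbitrary: n c)
  case (Suc m)
  have "finite (set_pmf (step G p (Suc n) c))"
    using step_finite[OF p _ Suc.prems(2)] Suc.prems(1) by simp
  moreover have "finite (set_pmf (run_from G p (Suc n) m c'))" if "c' \<in> set_pmf (step G p (Suc n) c)" for c'
    using Suc.IH step_config_wf[OF p _ Suc.prems(2) that] Suc.prems(1) by simp
  ultimately show ?case by simp
qed simp

lemma expectation_step:
  fixes f :: "('p, 's, 'h, 'z) config \<Rightarrow> real"
  assumes "behavioral_profile G q" "t \<in> {1..horizon G}" "\<forall>j. cfg_hist c j \<in> hist_set G t j"
  shows "measure_pmf.expectation (step G q t c) f
    = measure_pmf.expectation (Pi_pmf UNIV undefined (\<lambda>j. q t j (cfg_hist c j)))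
        (\<lambda>a. measure_pmf.expectation (noise G t) (\<lambda>w. f (next_config G t c a w)))"
  using joint_action_finite[OF assms] finite_noise by (simp add: step_def expectation_bind_pmf_finite)

lemma indicator_ev_hu_next_config:
  assumes q: "behavioral_profile G q" and \<tau>: "\<tau> \<in> {1..horizon G}" and c: "config_wf G (\<tau> - 1) c"
    and a: "a \<in> set_pmf (Pi_pmf UNIV undefined (\<lambda>j. q \<tau> j (cfg_hist c j)))" and w: "w \<in> set_pmf (noise G \<tau>)"
  shows "indicator (ev_hu G \<tau> i h u) (next_config G \<tau> c a w)
    = indicator {u} (a i) * (indicator {c. cfg_hist c i = h} c :: real)"
proof -
  have hs: "\<forall>j. cfg_hist c j \<in> hist_set G \<tau> j" and x: "cfg_state c \<in> Xs G \<tau>"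
    using c \<tau> by (simp_all add: config_wf_def)
  obtain x' z r where d: "dyn G \<tau> (cfg_state c) a w = (x', z, r)" by (cases "dyn G \<tau> (cfg_state c) a w")
  have "act G \<tau> i (fst (snd (dyn G \<tau> (cfg_state c) a w)) i) = a i"
    using dyn_wf[OF \<tau> x _ w d] joint_action_in_Us[OF q \<tau> hs a] d by simp
  moreover have "length (snd (cfg_hist c i)) = \<tau> - 1" using hist_set_length hs by metis
  ultimately show ?thesis
    using \<tau> by (auto simp: indicator_def next_config_in_ev_hu_iff)
qed

lemma expectation_run_from_ev_hu_step:
  fixes X :: "('p, 's, 'h, 'z) config \<Rightarrow> real"
  assumes q: "behavioral_profile G q" and \<tau>: "\<tau> \<in> {1..horizon G}" and c: "config_wf G (\<tau> - 1) c"
  shows "measure_pmf.expectation (run_from G q (\<tau> - 1) (Suc (horizon G - \<tau>)) c)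
      (\<lambda>c. indicator (ev_hu G \<tau> i h u) c * X c)
    = measure_pmf.expectation (step G q \<tau> c) (\<lambda>c'. indicator (ev_hu G \<tau> i h u) c'
        * measure_pmf.expectation (run_from G q \<tau> (horizon G - \<tau>) c') X)"
proof -
  have Suc_\<tau>: "Suc (\<tau> - 1) = \<tau>" and le: "Suc (\<tau> - 1) \<le> horizon G" using \<tau> by auto
  have step_wf: "c' \<in> set_pmf (step G q \<tau> c) \<Longrightarrow> config_wf G \<tau> c'" for c'
    using step_config_wf[OF q le c] unfolding Suc_\<tau> by blast
  have "measure_pmf.expectation (run_from G q (\<tau> - 1) (Suc (horizon G - \<tau>)) c)
      (\<lambda>c. indicator (ev_hu G \<tau> i h u) c * X c)
    = measure_pmf.expectation (step G q \<tau> c) (\<lambda>c'. measure_pmf.expectation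
        (run_from G q \<tau> (horizon G - \<tau>) c') (\<lambda>c. indicator (ev_hu G \<tau> i h u) c * X c))"
    using step_finite[OF q le c] run_from_finite[OF q _ step_wf] \<tau>
    by (simp add: Suc_\<tau> expectation_bind_pmf_finite)
  also have "\<dots> = measure_pmf.expectation (step G q \<tau> c) (\<lambda>c'. indicator (ev_hu G \<tau> i h u) c'
        * measure_pmf.expectation (run_from G q \<tau> (horizon G - \<tau>) c') X)"
  proof (rule expectation_cong_set_pmf)
    fix c' assume "c' \<in> set_pmf (step G q \<tau> c)"
    then have "cfg_hist c' i \<in> hist_set G (Suc \<tau>) i" using step_wf by (simp add: config_wf_def)
    from hist_set_length[OF this] have "\<tau> - 1 < length (snd (cfg_hist c' i))" using \<tau> by simp
    then show "measure_pmf.expectation (run_from G q \<tau> (horizon G - \<tau>) c')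
        (\<lambda>c. indicator (ev_hu G \<tau> i h u) c * X c)
      = indicator (ev_hu G \<tau> i h u) c' * measure_pmf.expectation (run_from G q \<tau> (horizon G - \<tau>) c') X"
      by (rule expectation_run_from_indicator_ev_hu)
  qed
  finally show ?thesis .
qed

lemma expectation_run_from_ev_hu:
  fixes X :: "('p, 's, 'h, 'z) config \<Rightarrow> real"
  assumes q: "behavioral_profile G q" and \<tau>: "\<tau> \<in> {1..horizon G}" and c: "config_wf G (\<tau> - 1) c"
  shows "measure_pmf.expectation (run_from G q (\<tau> - 1) (Suc (horizon G - \<tau>)) c)
      (\<lambda>c. indicator (ev_hu G \<tau> i h u) c * X c)
    = indicator {c. cfg_hist c i = h} c * (pmf (q \<tau> i h) u * continuation_value G q \<tau> i u c X)"
proof -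
  let ?P = "Pi_pmf UNIV undefined (\<lambda>j. q \<tau> j (cfg_hist c j))"
  let ?ev = "indicator (ev_hu G \<tau> i h u) :: ('p, 's, 'h, 'z) config \<Rightarrow> real"
  let ?Y = "\<lambda>c'. measure_pmf.expectation (run_from G q \<tau> (horizon G - \<tau>) c') X"
  have hs: "\<forall>j. cfg_hist c j \<in> hist_set G \<tau> j" using c \<tau> by (simp add: config_wf_def)
  have "measure_pmf.expectation (run_from G q (\<tau> - 1) (Suc (horizon G - \<tau>)) c) (\<lambda>c. ?ev c * X c)
      = measure_pmf.expectation ?P (\<lambda>a. measure_pmf.expectation (noise G \<tau>)
          (\<lambda>w. ?ev (next_config G \<tau> c a w) * ?Y (next_config G \<tau> c a w)))"
    unfolding expectation_run_from_ev_hu_step[OF q \<tau> c] by (rule expectation_step[OF q \<tau> hs])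
  also have "\<dots> = measure_pmf.expectation ?P (\<lambda>a. indicator {u} (a i) *
      (indicator {c. cfg_hist c i = h} c * measure_pmf.expectation (noise G \<tau>) (\<lambda>w. ?Y (next_config G \<tau> c a w))))"
  proof (rule expectation_cong_set_pmf)
    fix a assume a: "a \<in> set_pmf ?P"
    have "measure_pmf.expectation (noise G \<tau>) (\<lambda>w. ?ev (next_config G \<tau> c a w) * ?Y (next_config G \<tau> c a w))
      = measure_pmf.expectation (noise G \<tau>)
          (\<lambda>w. (indicator {u} (a i) * indicator {c. cfg_hist c i = h} c) * ?Y (next_config G \<tau> c a w))"
      by (rule expectation_cong_set_pmf) (simp add: indicator_ev_hu_next_config[OF q \<tau> c a])
    then show "measure_pmf.expectation (noise G \<tau>) (\<lambda>w. ?ev (next_config G \<tau> c a w) * ?Y (next_config G \<tau> c a w))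
      = indicator {u} (a i) * (indicator {c. cfg_hist c i = h} c
          * measure_pmf.expectation (noise G \<tau>) (\<lambda>w. ?Y (next_config G \<tau> c a w)))"
      by (simp add: mult.assoc)
  qed
  also have "\<dots> = indicator {c. cfg_hist c i = h} c * (pmf (q \<tau> i (cfg_hist c i)) u * continuation_value G q \<tau> i u c X)"
  proof -
    have "finite (set_pmf (q \<tau> j (cfg_hist c j)))" for j
      using behavioral_profile_set_pmf[OF q \<tau> hs[rule_format]] finite_Us by (rule finite_subset)
    then show ?thesis
      by (subst mult.left_commute, subst expectation_Pi_pmf_coordinate) (simp_all add: continuation_value_def)
  qed
  finally show ?thesis by (simp add: indicator_def)
qed

lemma expectation_ev_hu:
  fixes X :: "('p, 's, 'h, 'z) config \<Rightarrow> real"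
  assumes q: "behavioral_profile G q" and \<tau>: "\<tau> \<in> {1..horizon G}"
  shows "measure_pmf.expectation (run G q (horizon G)) (\<lambda>c. indicator (ev_hu G \<tau> i h u) c * X c)
    = measure_pmf.expectation (run G q (\<tau> - 1))
        (\<lambda>c. indicator {c. cfg_hist c i = h} c * (pmf (q \<tau> i h) u * continuation_value G q \<tau> i u c X))"
proof -
  have "\<tau> - 1 + Suc (horizon G - \<tau>) = horizon G" using \<tau> by auto
  then have "run G q (horizon G) = bind_pmf (run G q (\<tau> - 1)) (run_from G q (\<tau> - 1) (Suc (horizon G - \<tau>)))"
    using run_add[of G q "\<tau> - 1" "Suc (horizon G - \<tau>)"] by simp
  also have "measure_pmf.expectation \<dots> (\<lambda>c. indicator (ev_hu G \<tau> i h u) c * X c)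
    = measure_pmf.expectation (run G q (\<tau> - 1)) (\<lambda>c. measure_pmf.expectation
        (run_from G q (\<tau> - 1) (Suc (horizon G - \<tau>)) c) (\<lambda>c. indicator (ev_hu G \<tau> i h u) c * X c))"
  proof (rule expectation_bind_pmf_finite)
    show "finite (set_pmf (run G q (\<tau> - 1)))" by (rule finite_set_run[OF q]) (use \<tau> in auto)
    show "finite (set_pmf (run_from G q (\<tau> - 1) (Suc (horizon G - \<tau>)) c))"
      if "c \<in> set_pmf (run G q (\<tau> - 1))" for c
      by (rule run_from_finite[OF q _ run_config_wf[OF q _ that]]) (use \<tau> in auto)
  qed
  also have "\<dots> = measure_pmf.expectation (run G q (\<tau> - 1))
        (\<lambda>c. indicator {c. cfg_hist c i = h} c * (pmf (q \<tau> i h) u * continuation_value G q \<tau> i u c X))"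
    using run_config_wf[OF q] \<tau>
    by (intro expectation_cong_set_pmf expectation_run_from_ev_hu[OF q \<tau>]) auto
  finally show ?thesis .
qed

lemma prob_ev_hu:
  assumes "behavioral_profile G q" "\<tau> \<in> {1..horizon G}"
  shows "measure_pmf.prob (run G q (horizon G)) (ev_hu G \<tau> i h u)
    = pmf (q \<tau> i h) u * measure_pmf.prob (run G q (\<tau> - 1)) {c. cfg_hist c i = h}"
  using expectation_ev_hu[OF assms, of i h u "\<lambda>_. 1"]
  by (simp add: continuation_value_def mult.left_commute)

end

section \<open>Unilaterally sufficient information\<close>

lemma Pi_pmf_others_with_strat:
  "Pi_pmf (UNIV - {i}) d (\<lambda>j. with_strat i gi g t j (hs j)) = Pi_pmf (UNIV - {i}) d (\<lambda>j. g t j (hs j))"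
  by (rule Pi_pmf_cong) (auto simp: with_strat_def)

lemma mask_profile_with_strat: "mask_profile i (with_strat i gi g) = mask_profile i g"
  by (auto simp: mask_profile_def mask_def with_strat_def fun_eq_iff)

lemma with_strat_self: "with_strat i gi g t i = gi t"
  by (simp add: with_strat_def)

locale usi_game = finite_game G for G :: "('p::finite, 's, 'h, 'u, 'z, 'w) game" +
  fixes \<kappa> :: "('h, 'z) hist \<Rightarrow> 'k" and i :: 'p and g :: "('p, 'h, 'z, 'u) profile" and \<tau> :: nat
    and F :: "('h, 'z, 'u) strat \<Rightarrow> nat \<Rightarrow> 'k \<Rightarrow> ('h, 'z) hist pmf"
    and Phi :: "('p, 'h, 'z, 'u) profile \<Rightarrow> nat \<Rightarrow> 'k \<Rightarrow> ('s \<times> ('p \<Rightarrow> ('h, 'z) hist)) pmf"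
  assumes others_behavioral: "j \<noteq> i \<Longrightarrow> behavioral_strat G j (\<lambda>t. g t j)"
    and \<tau>: "\<tau> \<in> {1..horizon G}"
    and factorization: "\<And>q t k x hs. behavioral_profile G q \<Longrightarrow> t \<in> {1..horizon G} \<Longrightarrow>
      measure_pmf.prob (run G q (t - 1)) {c. \<kappa> (cfg_hist c i) = k} > 0 \<Longrightarrow>
      cprob (run G q (t - 1)) {c. cfg_state c = x \<and> cfg_hist c = hs} {c. \<kappa> (cfg_hist c i) = k}
        = pmf (F (\<lambda>t. q t i) t k) (hs i) * pmf (Phi (mask_profile i q) t k) (x, mask i hs)"
begin

definition belief :: "'k \<Rightarrow> ('s \<times> ('p \<Rightarrow> ('h, 'z) hist)) pmf" where
  "belief k = Phi (mask_profile i g) \<tau> k"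

definition belief_mean :: "'k \<Rightarrow> ('s \<Rightarrow> ('p \<Rightarrow> ('h, 'z) hist) \<Rightarrow> real) \<Rightarrow> real" where
  "belief_mean k \<Xi> = (\<Sum>y\<in>belief_support (belief k) i. pmf (belief k) y * \<Xi> (fst y) (snd y))
     / (\<Sum>y\<in>belief_support (belief k) i. pmf (belief k) y)"

text \<open>The factor \<open>P(K\<^sub>\<tau>\<^sup>i = k) F(h | k) g\<^sup>i(u | h)\<close> shared by the numerator and the denominator
  of a conditional expectation given \<open>H\<^sub>\<tau>\<^sup>i = h, U\<^sub>\<tau>\<^sup>i = u\<close>.\<close>
definition ev_hu_weight :: "('h, 'z, 'u) strat \<Rightarrow> ('h, 'z) hist \<Rightarrow> 'u \<Rightarrow> real" where
  "ev_hu_weight gi h u = measure_pmf.prob (run G (with_strat i gi g) (\<tau> - 1)) {c. \<kappa> (cfg_hist c i) = \<kappa> h}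
     * pmf (F gi \<tau> (\<kappa> h)) h * pmf (gi \<tau> h) u"

definition stage_reward :: "'u \<Rightarrow> 's \<Rightarrow> ('p \<Rightarrow> ('h, 'z) hist) \<Rightarrow> real" where
  "stage_reward u x hs = measure_pmf.expectation (Pi_pmf (UNIV - {i}) undefined (\<lambda>j. g \<tau> j (hs j)))
     (\<lambda>f. measure_pmf.expectation (noise G \<tau>) (\<lambda>w. snd (snd (dyn G \<tau> x (f(i := u)) w)) i))"

definition future_reward :: "('p, 's, 'h, 'z) config \<Rightarrow> real" where
  "future_reward c = (\<Sum>t\<in>{\<tau>+1..horizon G}. cfg_rew c t i)"

definition relative_future_reward :: "('p, 's, 'h, 'z) config \<Rightarrow> real" where
  "relative_future_reward c = (\<Sum>t\<in>{\<tau>+1..horizon G}. (snd (snd c) ! (t - 1 - \<tau>)) i)"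

definition continuation_reward :: "'u \<Rightarrow> ('h, 'z) hist \<Rightarrow> ('h, 'z, 'u) strat \<Rightarrow> 's \<Rightarrow> ('p \<Rightarrow> ('h, 'z) hist) \<Rightarrow> real" where
  "continuation_reward u h gt x hs =
     measure_pmf.expectation (Pi_pmf (UNIV - {i}) undefined (\<lambda>j. g \<tau> j (hs j)))
       (\<lambda>f. measure_pmf.expectation (noise G \<tau>) (\<lambda>w.
          measure_pmf.expectation (run_from G (shift_profile i h (with_strat i gt g)) \<tau> (horizon G - \<tau>)
            (relative_next G i \<tau> x hs (f(i := u)) w)) relative_future_reward))"

definition splice_strat :: "('h, 'z, 'u) strat \<Rightarrow> ('h, 'z, 'u) strat \<Rightarrow> ('h, 'z, 'u) strat" where
  "splice_strat gi gt = (\<lambda>t. if t \<le> \<tau> then gi t else gt t)"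

lemma behavioral_with_strat:
  assumes "behavioral_strat G i gi"
  shows "behavioral_profile G (with_strat i gi g)"
  unfolding behavioral_profile_def
proof
  fix j
  show "behavioral_strat G j (\<lambda>t. with_strat i gi g t j)"
    using assms others_behavioral[of j] by (cases "j = i") (simp_all add: with_strat_def)
qed

lemma behavioral_splice_strat:
  "behavioral_strat G i gi \<Longrightarrow> behavioral_strat G i gt \<Longrightarrow> behavioral_strat G i (splice_strat gi gt)"
  unfolding behavioral_strat_def splice_strat_def by auto

lemma Qfun_eq_cexp:
  "Qfun G (with_strat i gi g) i \<tau> h u =
     cexp (run G (with_strat i gi g) (horizon G)) (ev_hu G \<tau> i h u) (\<lambda>c. cfg_rew c \<tau> i)
     + (SUP gt\<in>{gt. behavioral_strat G i gt}.
          cexp (run G (with_strat i (splice_strat gi gt) g) (horizon G)) (ev_hu G \<tau> i h u) future_reward)"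
proof -
  have "with_strat i (\<lambda>t. if t \<le> \<tau> then with_strat i gi g t i else gt t) (with_strat i gi g)
      = with_strat i (splice_strat gi gt) g" for gt
    by (auto simp: splice_strat_def with_strat_def fun_eq_iff)
  then show ?thesis
    unfolding Qfun_def future_reward_def[abs_def] by simp
qed

lemma prob_ev_hu_splice_strat:
  assumes "behavioral_strat G i gi" "behavioral_strat G i gt"
  shows "measure_pmf.prob (run G (with_strat i (splice_strat gi gt) g) (horizon G)) (ev_hu G \<tau> i h u)
    = measure_pmf.prob (run G (with_strat i gi g) (horizon G)) (ev_hu G \<tau> i h u)"
proof -
  have "run G (with_strat i (splice_strat gi gt) g) (\<tau> - 1) = run G (with_strat i gi g) (\<tau> - 1)"
    by (rule run_cong) (auto simp: splice_strat_def with_strat_def)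
  moreover have "with_strat i (splice_strat gi gt) g \<tau> i = with_strat i gi g \<tau> i"
    by (simp add: splice_strat_def with_strat_def)
  ultimately show ?thesis
    unfolding prob_ev_hu[OF behavioral_with_strat[OF behavioral_splice_strat[OF assms]] \<tau>]
      prob_ev_hu[OF behavioral_with_strat[OF assms(1)] \<tau>] by simp
qed

lemma prob_ev_hu_posD:
  assumes "behavioral_strat G i gi"
    and "measure_pmf.prob (run G (with_strat i gi g) (horizon G)) (ev_hu G \<tau> i h u) > 0"
  shows "pmf (gi \<tau> h) u > 0" and "measure_pmf.prob (run G (with_strat i gi g) (\<tau> - 1)) {c. cfg_hist c i = h} > 0"
  using assms(2) prob_ev_hu[OF behavioral_with_strat[OF assms(1)] \<tau>, of i h u]
  by (simp_all add: with_strat_def zero_less_mult_iff)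

lemma prob_ev_hu_pos_hist_set:
  assumes "behavioral_strat G i gi"
    and "measure_pmf.prob (run G (with_strat i gi g) (horizon G)) (ev_hu G \<tau> i h u) > 0"
  shows "h \<in> hist_set G \<tau> i"
proof -
  let ?M = "run G (with_strat i gi g) (\<tau> - 1)"
  have "{c. cfg_hist c i = h} \<inter> set_pmf ?M \<noteq> {}"
  proof
    assume "{c. cfg_hist c i = h} \<inter> set_pmf ?M = {}"
    then have "measure_pmf.prob ?M {c. cfg_hist c i = h} = 0"
      using measure_Int_set_pmf[of ?M "{c. cfg_hist c i = h}"] by simp
    with prob_ev_hu_posD(2)[OF assms] show False by simp
  qed
  then obtain c where c: "c \<in> set_pmf ?M" "cfg_hist c i = h" by blast
  have "config_wf G (\<tau> - 1) c"
    by (rule run_config_wf[OF behavioral_with_strat[OF assms(1)] _ c(1)]) (use \<tau> in auto)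
  then show ?thesis using c(2) \<tau> by (auto simp: config_wf_def)
qed

lemma cprob_eq_belief:
  assumes gi: "behavioral_strat G i gi"
    and hist_pos: "measure_pmf.prob (run G (with_strat i gi g) (\<tau> - 1)) {c. cfg_hist c i = h} > 0"
  shows "cprob (run G (with_strat i gi g) (\<tau> - 1)) {c. cfg_state c = x \<and> cfg_hist c = hs}
      {c. \<kappa> (cfg_hist c i) = \<kappa> h}
    = pmf (F gi \<tau> (\<kappa> h)) (hs i) * pmf (belief (\<kappa> h)) (x, mask i hs)"
proof -
  have sub: "{c. cfg_hist c i = h} \<subseteq> {c. \<kappa> (cfg_hist c i) = \<kappa> h}" by auto
  have "measure_pmf.prob (run G (with_strat i gi g) (\<tau> - 1)) {c. \<kappa> (cfg_hist c i) = \<kappa> h} > 0"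
    using hist_pos measure_pmf.finite_measure_mono[OF sub, of "run G (with_strat i gi g) (\<tau> - 1)"] by simp
  from factorization[OF behavioral_with_strat[OF gi] \<tau> this] show ?thesis
    by (simp add: belief_def mask_profile_with_strat with_strat_self)
qed

lemma expectation_ev_hu_eq_belief_sum:
  fixes X :: "('p, 's, 'h, 'z) config \<Rightarrow> real"
  assumes gi: "behavioral_strat G i gi"
    and pos: "measure_pmf.prob (run G (with_strat i gi g) (horizon G)) (ev_hu G \<tau> i h u) > 0"
    and continuation: "\<And>c. c \<in> set_pmf (run G (with_strat i gi g) (\<tau> - 1)) \<Longrightarrow> cfg_hist c i = h \<Longrightarrow>
      continuation_value G (with_strat i gi g) \<tau> i u c X = \<Xi> (cfg_state c) (cfg_hist c)"
    and \<Xi>_fun_upd: "\<And>x hs v. \<Xi> x (hs(i := v)) = \<Xi> x hs"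
  shows "measure_pmf.expectation (run G (with_strat i gi g) (horizon G)) (\<lambda>c. indicator (ev_hu G \<tau> i h u) c * X c)
    = ev_hu_weight gi h u * (\<Sum>y\<in>belief_support (belief (\<kappa> h)) i. pmf (belief (\<kappa> h)) y * \<Xi> (fst y) (snd y))"
proof -
  let ?q = "with_strat i gi g"
  have q: "behavioral_profile G ?q" by (rule behavioral_with_strat[OF gi])
  have fin: "finite (set_pmf (run G ?q (\<tau> - 1)))" by (rule finite_set_run[OF q]) (use \<tau> in auto)
  have hist_pos: "measure_pmf.prob (run G ?q (\<tau> - 1)) {c. cfg_hist c i = h} > 0"
    by (rule prob_ev_hu_posD(2)[OF gi pos])
  have sub: "{c. cfg_hist c i = h} \<subseteq> {c. \<kappa> (cfg_hist c i) = \<kappa> h}" by auto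
  note hist_factorization = expectation_hist_factorization[OF fin cprob_eq_belief[OF gi hist_pos] sub hist_pos]
  have "measure_pmf.expectation (run G ?q (horizon G)) (\<lambda>c. indicator (ev_hu G \<tau> i h u) c * X c)
      = measure_pmf.prob (run G ?q (\<tau> - 1)) {c. \<kappa> (cfg_hist c i) = \<kappa> h} * pmf (F gi \<tau> (\<kappa> h)) h
          * (\<Sum>y\<in>belief_support (belief (\<kappa> h)) i. pmf (belief (\<kappa> h)) y * (pmf (gi \<tau> h) u * \<Xi> (fst y) (snd y)))"
    unfolding expectation_ev_hu[OF q \<tau>] with_strat_self
    by (subst hist_factorization[where \<Xi> = "\<lambda>x hs. pmf (gi \<tau> h) u * \<Xi> x hs"])
       (simp_all add: continuation \<Xi>_fun_upd)
  then show ?thesis by (simp add: ev_hu_weight_def sum_distrib_left ac_simps)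
qed

lemma ev_hu_weight_pos:
  assumes gi: "behavioral_strat G i gi"
    and pos: "measure_pmf.prob (run G (with_strat i gi g) (horizon G)) (ev_hu G \<tau> i h u) > 0"
  shows "ev_hu_weight gi h u > 0"
proof -
  let ?M = "run G (with_strat i gi g) (\<tau> - 1)"
  have fin: "finite (set_pmf ?M)"
    by (rule finite_set_run[OF behavioral_with_strat[OF gi]]) (use \<tau> in auto)
  have hist_pos: "measure_pmf.prob ?M {c. cfg_hist c i = h} > 0" by (rule prob_ev_hu_posD(2)[OF gi pos])
  have sub: "{c. cfg_hist c i = h} \<subseteq> {c. \<kappa> (cfg_hist c i) = \<kappa> h}" by auto
  have "measure_pmf.prob ?M {c. \<kappa> (cfg_hist c i) = \<kappa> h} > 0"
    using hist_pos measure_pmf.finite_measure_mono[OF sub, of ?M] by simp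
  moreover have "pmf (F gi \<tau> (\<kappa> h)) h > 0"
    by (rule pmf_Fk_pos[OF fin cprob_eq_belief[OF gi hist_pos] sub hist_pos])
  ultimately show ?thesis
    using prob_ev_hu_posD(1)[OF gi pos] by (simp add: ev_hu_weight_def)
qed

lemma cexp_ev_hu_eq_belief_mean:
  fixes X :: "('p, 's, 'h, 'z) config \<Rightarrow> real"
  assumes gi: "behavioral_strat G i gi"
    and pos: "measure_pmf.prob (run G (with_strat i gi g) (horizon G)) (ev_hu G \<tau> i h u) > 0"
    and continuation: "\<And>c. c \<in> set_pmf (run G (with_strat i gi g) (\<tau> - 1)) \<Longrightarrow> cfg_hist c i = h \<Longrightarrow>
      continuation_value G (with_strat i gi g) \<tau> i u c X = \<Xi> (cfg_state c) (cfg_hist c)"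
    and \<Xi>_fun_upd: "\<And>x hs v. \<Xi> x (hs(i := v)) = \<Xi> x hs"
  shows "cexp (run G (with_strat i gi g) (horizon G)) (ev_hu G \<tau> i h u) X = belief_mean (\<kappa> h) \<Xi>"
proof -
  have "measure_pmf.prob (run G (with_strat i gi g) (horizon G)) (ev_hu G \<tau> i h u)
      = ev_hu_weight gi h u * (\<Sum>y\<in>belief_support (belief (\<kappa> h)) i. pmf (belief (\<kappa> h)) y)"
    using expectation_ev_hu_eq_belief_sum[OF gi pos, where X = "\<lambda>_. 1" and \<Xi> = "\<lambda>_ _. 1"]
    by (simp add: continuation_value_def)
  then show ?thesis
    using expectation_ev_hu_eq_belief_sum[OF gi pos continuation \<Xi>_fun_upd] ev_hu_weight_pos[OF gi pos] pos
    by (simp add: cexp_def belief_mean_def)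
qed

lemma cexp_stage_reward:
  assumes gi: "behavioral_strat G i gi"
    and pos: "measure_pmf.prob (run G (with_strat i gi g) (horizon G)) (ev_hu G \<tau> i h u) > 0"
  shows "cexp (run G (with_strat i gi g) (horizon G)) (ev_hu G \<tau> i h u) (\<lambda>c. cfg_rew c \<tau> i)
    = belief_mean (\<kappa> h) (stage_reward u)"
proof (rule cexp_ev_hu_eq_belief_mean[OF gi pos])
  fix c assume "c \<in> set_pmf (run G (with_strat i gi g) (\<tau> - 1))"
  then have "config_wf G (\<tau> - 1) c"
    by (rule run_config_wf[OF behavioral_with_strat[OF gi], rotated]) (use \<tau> in auto)
  then have "length (snd (snd c)) = \<tau> - 1" by (simp add: config_wf_def)
  then show "continuation_value G (with_strat i gi g) \<tau> i u c (\<lambda>c. cfg_rew c \<tau> i)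
      = stage_reward u (cfg_state c) (cfg_hist c)"
    using \<tau> by (simp add: continuation_value_def stage_reward_def Pi_pmf_others_with_strat
        expectation_run_from_cfg_rew next_config_simps cfg_rew_next_config)
next
  show "stage_reward u x (hs(i := v)) = stage_reward u x hs" for x hs v
    unfolding stage_reward_def Pi_pmf_others_fun_upd ..
qed

lemma future_reward_attach_prefix:
  "length rs = \<tau> \<Longrightarrow> future_reward (attach_prefix i h rs c) = relative_future_reward c"
  unfolding future_reward_def relative_future_reward_def
  by (rule sum.cong) (auto simp: attach_prefix_def cfg_rew_def nth_append)

lemma cexp_future_reward:
  assumes gi: "behavioral_strat G i gi" and gt: "behavioral_strat G i gt"
    and pos: "measure_pmf.prob (run G (with_strat i gi g) (horizon G)) (ev_hu G \<tau> i h u) > 0"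
  shows "cexp (run G (with_strat i (splice_strat gi gt) g) (horizon G)) (ev_hu G \<tau> i h u) future_reward
    = belief_mean (\<kappa> h) (continuation_reward u h gt)"
proof (rule cexp_ev_hu_eq_belief_mean)
  let ?q = "with_strat i (splice_strat gi gt) g"
  show "behavioral_strat G i (splice_strat gi gt)" by (rule behavioral_splice_strat[OF gi gt])
  show "measure_pmf.prob (run G ?q (horizon G)) (ev_hu G \<tau> i h u) > 0"
    using pos prob_ev_hu_splice_strat[OF gi gt] by simp
  fix c assume c: "c \<in> set_pmf (run G ?q (\<tau> - 1))" and h: "cfg_hist c i = h"
  have "config_wf G (\<tau> - 1) c"
    by (rule run_config_wf[OF behavioral_with_strat[OF \<open>behavioral_strat G i (splice_strat gi gt)\<close>] _ c])
       (use \<tau> in auto)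
  then have len: "length (snd (snd c) @ [r]) = \<tau>" for r :: "'p \<Rightarrow> real"
    using \<tau> by (simp add: config_wf_def)
  have shift: "run_from G (shift_profile i h ?q) \<tau> m = run_from G (shift_profile i h (with_strat i gt g)) \<tau> m" for m
    by (rule run_from_cong) (simp add: shift_profile_def with_strat_def splice_strat_def fun_eq_iff)
  show "continuation_value G ?q \<tau> i u c future_reward = continuation_reward u h gt (cfg_state c) (cfg_hist c)"
    unfolding continuation_value_def continuation_reward_def Pi_pmf_others_with_strat
      next_config_eq_attach_prefix[OF h] run_from_attach_prefix shift
    by (simp add: future_reward_attach_prefix[OF len])
next
  show "continuation_reward u h gt x (hs(i := v)) = continuation_reward u h gt x hs" for x hs v
    unfolding continuation_reward_def Pi_pmf_others_fun_upd relative_next_fun_upd ..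
qed

lemma Qfun_eq_belief_mean:
  assumes gi: "behavioral_strat G i gi"
    and pos: "measure_pmf.prob (run G (with_strat i gi g) (horizon G)) (ev_hu G \<tau> i h u) > 0"
  shows "Qfun G (with_strat i gi g) i \<tau> h u = belief_mean (\<kappa> h) (stage_reward u)
    + (SUP gt\<in>{gt. behavioral_strat G i gt}. belief_mean (\<kappa> h) (continuation_reward u h gt))"
  unfolding Qfun_eq_cexp cexp_stage_reward[OF gi pos]
  using cexp_future_reward[OF gi _ pos] by (auto intro!: SUP_cong)

lemma abs_future_reward_le: "config_wf G (horizon G) c \<Longrightarrow> \<bar>future_reward c\<bar> \<le> real (horizon G - \<tau>)"
proof -
  assume c: "config_wf G (horizon G) c"
  have "\<bar>future_reward c\<bar> \<le> (\<Sum>t\<in>{\<tau>+1..horizon G}. \<bar>cfg_rew c t i\<bar>)"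
    unfolding future_reward_def by (rule sum_abs)
  also have "\<dots> \<le> (\<Sum>t\<in>{\<tau>+1..horizon G}. 1)"
    by (rule sum_mono) (use abs_cfg_rew_le[OF c] in auto)
  finally show ?thesis by simp
qed

lemma Qfun_bounded:
  assumes gi: "behavioral_strat G i gi"
    and pos: "measure_pmf.prob (run G (with_strat i gi g) (horizon G)) (ev_hu G \<tau> i h u) > 0"
  shows "Qfun G (with_strat i gi g) i \<tau> h u \<in> {- real (horizon G) .. real (horizon G)}"
proof -
  have run_wf: "finite (set_pmf (run G q (horizon G)))" "\<And>c. c \<in> set_pmf (run G q (horizon G)) \<Longrightarrow> config_wf G (horizon G) c"
    if "behavioral_profile G q" for q
    using run_finite_config_wf[OF that] by simp_all
  have stage: "\<bar>cexp (run G (with_strat i gi g) (horizon G)) (ev_hu G \<tau> i h u) (\<lambda>c. cfg_rew c \<tau> i)\<bar> \<le> 1"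
  proof (rule cexp_abs_le[OF _ pos])
    note wf = run_wf[OF behavioral_with_strat[OF gi]]
    show "finite (set_pmf (run G (with_strat i gi g) (horizon G)))" by (rule wf(1))
    fix c assume "c \<in> set_pmf (run G (with_strat i gi g) (horizon G))"
    from wf(2)[OF this] show "\<bar>cfg_rew c \<tau> i\<bar> \<le> 1" by (rule abs_cfg_rew_le) (use \<tau> in auto)
  qed
  have "\<bar>cexp (run G (with_strat i (splice_strat gi gt) g) (horizon G)) (ev_hu G \<tau> i h u) future_reward\<bar>
      \<le> real (horizon G - \<tau>)" if gt: "behavioral_strat G i gt" for gt
    using run_wf[OF behavioral_with_strat[OF behavioral_splice_strat[OF gi gt]]]
    by (intro cexp_abs_le abs_future_reward_le) (simp_all add: pos prob_ev_hu_splice_strat[OF gi gt])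
  then have "\<bar>SUP gt\<in>{gt. behavioral_strat G i gt}.
      cexp (run G (with_strat i (splice_strat gi gt) g) (horizon G)) (ev_hu G \<tau> i h u) future_reward\<bar>
      \<le> real (horizon G - \<tau>)"
    using gi by (intro abs_SUP_le) auto
  then show ?thesis
    using stage \<tau> by (simp add: Qfun_eq_cexp abs_le_iff)
qed

definition transplant :: "('h, 'z) hist \<Rightarrow> ('h, 'z) hist \<Rightarrow> ('h, 'z, 'u) strat \<Rightarrow> ('h, 'z, 'u) strat" where
  "transplant h h' gt = (\<lambda>t hh. if \<tau> - 1 \<le> length (snd hh) \<and> hist_at \<tau> hh = h'
     then gt t (fst h, snd h @ drop (\<tau> - 1) (snd hh)) else gt t hh)"

lemma behavioral_transplant:
  assumes h: "h \<in> hist_set G \<tau> i" and gt: "behavioral_strat G i gt"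
  shows "behavioral_strat G i (transplant h h' gt)"
  unfolding behavioral_strat_def
proof (intro ballI)
  fix t hh assume t: "t \<in> {1..horizon G}" and hh: "hh \<in> hist_set G t i"
  have "set_pmf (gt t hh') \<subseteq> Us G t i" if "hh' \<in> hist_set G t i" for hh'
    using gt t that unfolding behavioral_strat_def by blast
  then show "set_pmf (transplant h h' gt t hh) \<subseteq> Us G t i"
    using hist_set_replace_prefix[OF h hh] hh unfolding transplant_def by simp
qed

lemma continuation_reward_transplant:
  assumes "h \<in> hist_set G \<tau> i" "h' \<in> hist_set G \<tau> i"
  shows "continuation_reward u h' (transplant h h' gt) = continuation_reward u h gt"
proof -
  have "length (snd h) = \<tau> - 1" "length (snd h') = \<tau> - 1"
    using hist_set_length[OF assms(1)] hist_set_length[OF assms(2)] by simp_all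
  then have "shift_profile i h' (with_strat i (transplant h h' gt) g) = shift_profile i h (with_strat i gt g)"
    by (auto simp: shift_profile_def with_strat_def transplant_def hist_at_def fun_eq_iff)
  then show ?thesis unfolding continuation_reward_def[abs_def] by simp
qed

lemma continuation_reward_image_subset:
  assumes "h \<in> hist_set G \<tau> i" "h' \<in> hist_set G \<tau> i"
  shows "(\<lambda>gt. \<Psi> (continuation_reward u h gt)) ` {gt. behavioral_strat G i gt}
    \<subseteq> (\<lambda>gt. \<Psi> (continuation_reward u h' gt)) ` {gt. behavioral_strat G i gt}"
proof
  fix v assume "v \<in> (\<lambda>gt. \<Psi> (continuation_reward u h gt)) ` {gt. behavioral_strat G i gt}"
  then obtain gt where gt: "behavioral_strat G i gt" and v: "v = \<Psi> (continuation_reward u h gt)" by blast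
  then have "v = \<Psi> (continuation_reward u h' (transplant h h' gt))"
    using continuation_reward_transplant[OF assms] by simp
  moreover have "behavioral_strat G i (transplant h h' gt)" by (rule behavioral_transplant[OF assms(1) gt])
  ultimately show "v \<in> (\<lambda>gt. \<Psi> (continuation_reward u h' gt)) ` {gt. behavioral_strat G i gt}" by blast
qed

lemma Qfun_eq_of_kappa_eq:
  assumes gi: "behavioral_strat G i gi"
    and pos: "measure_pmf.prob (run G (with_strat i gi g) (horizon G)) (ev_hu G \<tau> i h u) > 0"
    and gi': "behavioral_strat G i gi'"
    and pos': "measure_pmf.prob (run G (with_strat i gi' g) (horizon G)) (ev_hu G \<tau> i h' u) > 0"
    and \<kappa>: "\<kappa> h' = \<kappa> h"
  shows "Qfun G (with_strat i gi' g) i \<tau> h' u = Qfun G (with_strat i gi g) i \<tau> h u"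
proof -
  have h: "h \<in> hist_set G \<tau> i" and h': "h' \<in> hist_set G \<tau> i"
    using prob_ev_hu_pos_hist_set gi pos gi' pos' by blast+
  have "(\<lambda>gt. belief_mean (\<kappa> h) (continuation_reward u h' gt)) ` {gt. behavioral_strat G i gt}
      = (\<lambda>gt. belief_mean (\<kappa> h) (continuation_reward u h gt)) ` {gt. behavioral_strat G i gt}"
    by (intro subset_antisym continuation_reward_image_subset h h')
  then show ?thesis
    unfolding Qfun_eq_belief_mean[OF gi pos] Qfun_eq_belief_mean[OF gi' pos'] \<kappa> by simp
qed

end

lemma factor_through_fibres:
  assumes "\<And>a b. P a \<Longrightarrow> P b \<Longrightarrow> \<kappa> a = \<kappa> b \<Longrightarrow> f a = f b"
    and "\<And>a. P a \<Longrightarrow> f a \<in> S" and "c \<in> S"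
  obtains Q where "\<And>k. Q k \<in> S" and "\<And>a. P a \<Longrightarrow> f a = Q (\<kappa> a)"
proof -
  let ?rep = "\<lambda>k. SOME a. P a \<and> \<kappa> a = k"
  define Q where "Q k = (if \<exists>a. P a \<and> \<kappa> a = k then f (?rep k) else c)" for k
  have rep: "P (?rep k) \<and> \<kappa> (?rep k) = k" if "\<exists>a. P a \<and> \<kappa> a = k" for k
    using someI_ex[OF that] .
  have "Q k \<in> S" for k
    using rep[of k] assms(2)[of "?rep k"] assms(3) unfolding Q_def by auto
  moreover have "f a = Q (\<kappa> a)" if "P a" for a
    using rep[of "\<kappa> a"] assms(1)[OF that, of "?rep (\<kappa> a)"] that unfolding Q_def by auto
  ultimately show thesis using that by blast
qed

theorem lemma10:
  fixes G :: "('p::finite, 's, 'h, 'u, 'z, 'w) game"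
    and iota1 :: "'p \<Rightarrow> 'h \<Rightarrow> 'k"
    and iota :: "nat \<Rightarrow> 'p \<Rightarrow> 'k \<Rightarrow> 'z \<Rightarrow> 'k"
    and Ks :: "nat \<Rightarrow> 'p \<Rightarrow> 'k set"
    and i :: 'p
    and g :: "('p, 'h, 'z, 'u) profile"
    and \<tau> :: nat
  assumes "game_wf G"
    and "compression_wf G iota1 iota Ks"
    and "usi G iota1 iota i"
    and "\<forall>j. j \<noteq> i \<longrightarrow> fully_mixed_strat G j (\<lambda>t. g t j)"
    and "\<tau> \<in> {1..horizon G}"
  shows "\<exists>Qh :: 'k \<Rightarrow> 'u \<Rightarrow> real.
           (\<forall>k\<in>Ks \<tau> i. \<forall>u\<in>Us G \<tau> i. Qh k u \<in> {- real (horizon G) .. real (horizon G)}) \<and>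
           (\<forall>gi h u. behavioral_strat G i gi \<longrightarrow>
              measure_pmf.prob (run G (with_strat i gi g) (horizon G)) (ev_hu G \<tau> i h u) > 0 \<longrightarrow>
              Qfun G (with_strat i gi g) i \<tau> h u = Qh (compress iota1 iota i h) u)"
proof -
  from assms(3) obtain F Phi where factorization: "\<And>q t k x hs. behavioral_profile G q \<Longrightarrow>
      t \<in> {1..horizon G} \<Longrightarrow> measure_pmf.prob (run G q (t - 1)) {c. compress iota1 iota i (cfg_hist c i) = k} > 0 \<Longrightarrow>
      cprob (run G q (t - 1)) {c. cfg_state c = x \<and> cfg_hist c = hs} {c. compress iota1 iota i (cfg_hist c i) = k}
        = pmf (F (\<lambda>t. q t i) t k) (hs i) * pmf (Phi (mask_profile i q) t k) (x, mask i hs)"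
    unfolding usi_def Let_def by blast
  interpret usi_game G "compress iota1 iota i" i g \<tau> F Phi
  proof unfold_locales
    show "behavioral_strat G j (\<lambda>t. g t j)" if "j \<noteq> i" for j
      using assms(4) that by (simp add: fully_mixed_strat_def behavioral_strat_def)
  qed (fact assms(1) assms(5) factorization)+
  let ?admissible = "\<lambda>(gi, h, u). behavioral_strat G i gi \<and>
    measure_pmf.prob (run G (with_strat i gi g) (horizon G)) (ev_hu G \<tau> i h u) > 0"
  let ?Q = "\<lambda>(gi, h, u). Qfun G (with_strat i gi g) i \<tau> h u"
  let ?k = "\<lambda>(gi :: ('h, 'z, 'u) strat, h, u :: 'u). (compress iota1 iota i h, u)"
  obtain Q where "\<And>k. Q k \<in> {- real (horizon G) .. real (horizon G)}"
    and "\<And>a. ?admissible a \<Longrightarrow> ?Q a = Q (?k a)"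
  proof (rule factor_through_fibres[where P = ?admissible and \<kappa> = ?k and f = ?Q and c = 0])
    show "?Q a = ?Q b" if "?admissible a" "?admissible b" "?k a = ?k b" for a b
      using that by (auto intro: Qfun_eq_of_kappa_eq)
    show "?Q a \<in> {- real (horizon G) .. real (horizon G)}" if "?admissible a" for a
      using that Qfun_bounded by auto
  qed auto
  then show ?thesis by (intro exI[of _ "curry Q"]) auto
qed

end
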